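(* For a positive integer $h$ and a prime $p$, let $m_p(h)$ denote the exponent of $p$ in $h$ (so $p^{m_p(h)}\mid h$, $p^{m_p(h)+1}\nmid h$). Define $$W_2(h)=\begin{cases}\tfrac14, & m_2(h)=0,\\[2pt] \dfrac{2^{m_2(h)+1}-3}{2^{m_2(h)+2}}, & m_2(h)\ge 1,\end{cases}\qquad \mathscr{T}_h=2W_2(h)\prod_{\substack{p\equiv 3 \ (\mathrm{mod}\ 4)\\ p\mid h}}\frac{1-p^{-(m_p(h)+1)}}{1-p^{-1}},$$ and let $\beta=\frac{1}{\sqrt2}\prod_{p\equiv 3\ (\mathrm{mod}\ 4)}(1-p^{-2})^{-1/2}$ (the Landau–Ramanujan constant). Then for every $\varepsilon>0$, as $H\to\infty$, $$\sum_{\substack{1\le d_1,d_2\le H\\ d_1\neq d_2}}\mathscr{T}_{|d_2-d_1|}=2\sum_{1\le h\le H-1}(H-h)\,\mathscr{T}_h=\beta^2H^2+O_\varepsilon(H^{1+\varepsilon}).$$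
   Context: Here $p$ ranges over primes. $\mathscr{T}_h$ is the singular series of the Connors–Keating pair-correlation conjecture for integers representable as a sum of two squares. *)

theory Defs
  imports "HOL-Analysis.Analysis" "HOL-Library.Landau_Symbols"
begin

definition W2 :: "nat \<Rightarrow> real" where
  "W2 h = (if multiplicity (2::nat) h = 0 then 1/4
           else (2 ^ (multiplicity (2::nat) h + 1) - 3) / 2 ^ (multiplicity (2::nat) h + 2))"

definition singT :: "nat \<Rightarrow> real" where
  "singT h = 2 * W2 h *
     (\<Prod>p\<in>{p. prime p \<and> p mod 4 = 3 \<and> p dvd h}.
        (1 - (real p) powr (- (real (multiplicity p h) + 1))) / (1 - 1 / real p))"

definition LR_beta :: real where
  "LR_beta = (1 / sqrt 2) *
     (\<Prod>n. if prime n \<and> n mod 4 = 3 then (1 - 1 / (real n)^2) powr (-1/2) else 1)"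

end

theory Submission
  imports Defs "HOL-Real_Asymp.Real_Asymp"
begin

(* Writing S(N) = sum_{h<=N} T_h, the sum over ordered pairs d1 <> d2 in [1,H] of T_|d2-d1|
   equals 2 sum_{h<H} (H-h) T_h = 2 sum_{N<H} S(N) (elementary counting, first section).

   The analytic input is a divisor-sum form of the singular series,
       T_h = (sum_{k <= m_2(h)} c2 k) * sum_{n | h, n in D} 1/n,
   where D is the set of positive integers all of whose prime factors are 3 mod 4: each
   local factor of T_h is a geometric sum, and a finite Euler product turns the product of
   these into a sum over divisors.  Swapping sums gives
       S(N) = sum_{k,n <= N} (c2 k / n) floor(N / (2^k n)) = (Z/2) N + O(log N),
   with Z = sum_{n in D} 1/n^2, because sum_k c2 k / 2^k = 1/2 up to an exponentially small
   error.  The Euler product Z = prod_{p = 3 mod 4} (1 - p^-2)^-1 identifies Z/2 with the square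
   of the Landau-Ramanujan constant beta.  Summing over N < H yields
       beta^2 H^2 + O(H log H), which is O(H^(1+eps)) for every eps > 0. *)

definition pair_sum :: "(nat \<Rightarrow> real) \<Rightarrow> nat \<Rightarrow> real" where
  "pair_sum F H = (\<Sum>(d1, d2)\<in>{(d1, d2). d1 \<in> {1..H} \<and> d2 \<in> {1..H} \<and> d1 \<noteq> d2}.
                     F (nat \<bar>int d2 - int d1\<bar>))"

lemma sum_reflect: "(\<Sum>d=1..H. F (Suc H - d)) = (\<Sum>h=1..H. (F h :: real))"
  by (subst (2) sum.atLeastAtMost_rev) simp

(* Passing from H to H + 1 adds the pairs (H+1, d) and (d, H+1) with d <= H, whose
   differences H + 1 - d run over [1,H] twice. *)

lemma pair_sum_Suc: "pair_sum F (Suc H) = pair_sum F H + 2 * (\<Sum>h=1..H. F h)"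
proof -
  define A :: "nat \<Rightarrow> (nat \<times> nat) set" where "A H = {(d1, d2). d1 \<in> {1..H} \<and> d2 \<in> {1..H} \<and> d1 \<noteq> d2}" for H
  define g where "g = (\<lambda>(d1::nat, d2::nat). F (nat \<bar>int d2 - int d1\<bar>))"
  have fin: "finite (A H)" by (rule finite_subset[of _ "{1..H} \<times> {1..H}"]) (auto simp: A_def)
  have split: "A (Suc H) = A H \<union> (Pair (Suc H) ` {1..H} \<union> (\<lambda>d. (d, Suc H)) ` {1..H})"
    by (auto simp: A_def le_Suc_eq)
  have row: "sum g (Pair (Suc H) ` {1..H}) = (\<Sum>h=1..H. F h)"
  proof -
    have "sum g (Pair (Suc H) ` {1..H}) = (\<Sum>d=1..H. F (Suc H - d))"
      by (subst sum.reindex) (auto simp: inj_on_def g_def intro!: sum.cong arg_cong[where f=F])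
    thus ?thesis by (simp only: sum_reflect)
  qed
  have col: "sum g ((\<lambda>d. (d, Suc H)) ` {1..H}) = (\<Sum>h=1..H. F h)"
  proof -
    have "sum g ((\<lambda>d. (d, Suc H)) ` {1..H}) = (\<Sum>d=1..H. F (Suc H - d))"
      by (subst sum.reindex) (auto simp: inj_on_def g_def intro!: sum.cong arg_cong[where f=F])
    thus ?thesis by (simp only: sum_reflect)
  qed
  have "pair_sum F (Suc H) = sum g (A (Suc H))" by (simp add: pair_sum_def A_def g_def)
  also have "\<dots> = sum g (A H) + (sum g (Pair (Suc H) ` {1..H}) + sum g ((\<lambda>d. (d, Suc H)) ` {1..H}))"
    unfolding split using fin by (subst sum.union_disjoint; (subst sum.union_disjoint)?) (auto simp: A_def)
  also have "sum g (A H) = pair_sum F H" by (simp add: pair_sum_def A_def g_def)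
  finally show ?thesis using row col by simp
qed

lemma pair_sum_partial_sums: "pair_sum F H = 2 * (\<Sum>N=1..H-1. \<Sum>h=1..N. F h)"
proof (induction H)
  case 0 show ?case by (simp add: pair_sum_def)
next
  case (Suc H) thus ?case by (cases H) (simp_all add: pair_sum_Suc sum.cl_ivl_Suc)
qed

lemma weighted_sum_partial_sums:
  fixes f :: "nat \<Rightarrow> real"
  shows "(\<Sum>h=1..H-1. real (H - h) * f h) = (\<Sum>N=1..H-1. \<Sum>h=1..N. f h)"
proof (induction H)
  case (Suc H)
  have "(\<Sum>h=1..H. real (Suc H - h) * f h) = (\<Sum>h=1..H. real (H - h) * f h + f h)"
    by (intro sum.cong refl) (auto simp: Suc_diff_le algebra_simps)
  also have "\<dots> = (\<Sum>h=1..H-1. real (H - h) * f h) + (\<Sum>h=1..H. f h)"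
    by (cases H) (simp_all add: sum.distrib sum.cl_ivl_Suc)
  finally show ?case using Suc.IH by (cases H) (simp_all add: sum.cl_ivl_Suc)
qed simp

(* bounded_exp_numbers P J: the positive integers whose prime factors lie in P and whose
   p-adic valuation is at most J p.  They are exactly the products prod_{p in P} p^(g p) with
   g p <= J p, which turns finite products of geometric sums into sums over integers. *)

definition bounded_exp_numbers :: "nat set \<Rightarrow> (nat \<Rightarrow> nat) \<Rightarrow> nat set" where
  "bounded_exp_numbers P J =
     {n. n > 0 \<and> (\<forall>q. prime q \<longrightarrow> q dvd n \<longrightarrow> q \<in> P) \<and> (\<forall>p\<in>P. multiplicity p n \<le> J p)}"

lemma bounded_exp_numbers_factorisation:
  assumes fin: "finite P" and pr: "\<forall>p\<in>P. prime p" and n: "n \<in> bounded_exp_numbers P J"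
  shows "n = (\<Prod>p\<in>P. p ^ multiplicity p n)"
proof -
  from n have n0: "n > 0" and nq: "\<And>q. prime q \<Longrightarrow> q dvd n \<Longrightarrow> q \<in> P"
    by (auto simp: bounded_exp_numbers_def)
  have "normalize (\<Prod>p\<in>P. p ^ multiplicity p n) = normalize n"
  proof (rule multiplicity_eq_imp_eq)
    fix q :: nat assume q: "prime q"
    have "q \<notin> P \<Longrightarrow> multiplicity q n = 0" using nq[OF q] by (metis not_dvd_imp_multiplicity_0)
    thus "multiplicity q (\<Prod>p\<in>P. p ^ multiplicity p n) = multiplicity q n"
      using fin pr q by (simp add: multiplicity_prod_prime_powers)
  qed (use pr n0 in \<open>auto simp: prime_gt_0_nat intro!: prod_pos\<close>)
  thus ?thesis by simp
qed

lemma bounded_exp_numbers_bij: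
  assumes fin: "finite P" and pr: "\<forall>p\<in>P. prime p"
  shows "bij_betw (\<lambda>g. \<Prod>p\<in>P. p ^ g p) (PiE P (\<lambda>p. {0..J p})) (bounded_exp_numbers P J)"
proof -
  have mult: "multiplicity q (\<Prod>p\<in>P. p ^ g p) = (if q \<in> P then g q else 0)" if "prime q" for q g
    using fin pr that by (simp add: multiplicity_prod_prime_powers)
  have pos: "(\<Prod>p\<in>P. p ^ g p) > 0" for g using pr by (auto simp: prime_gt_0_nat intro!: prod_pos)
  have inj: "inj_on (\<lambda>g. \<Prod>p\<in>P. p ^ g p) (PiE P (\<lambda>p. {0..J p}))"
  proof (rule inj_onI)
    fix g h assume g: "g \<in> PiE P (\<lambda>p. {0..J p})" and h: "h \<in> PiE P (\<lambda>p. {0..J p})"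
      and eq: "(\<Prod>p\<in>P. p ^ g p) = (\<Prod>p\<in>P. p ^ h p)"
    show "g = h"
    proof (rule PiE_ext[OF g h])
      fix i assume "i \<in> P"
      thus "g i = h i" using mult[of i g] mult[of i h] eq pr by simp
    qed
  qed
  have "(\<lambda>g. \<Prod>p\<in>P. p ^ g p) ` PiE P (\<lambda>p. {0..J p}) \<subseteq> bounded_exp_numbers P J"
  proof (clarify)
    fix g assume g: "g \<in> PiE P (\<lambda>p. {0..J p})"
    show "(\<Prod>p\<in>P. p ^ g p) \<in> bounded_exp_numbers P J"
      unfolding bounded_exp_numbers_def
    proof (intro CollectI conjI allI impI ballI pos)
      fix q :: nat assume q: "prime q" "q dvd (\<Prod>p\<in>P. p ^ g p)"
      hence "multiplicity q (\<Prod>p\<in>P. p ^ g p) > 0" using pos[of g] by (simp add: prime_multiplicity_gt_zero_iff)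
      thus "q \<in> P" using mult[OF q(1)] by (auto split: if_splits)
    next
      fix p assume "p \<in> P"
      thus "multiplicity p (\<Prod>p\<in>P. p ^ g p) \<le> J p" using mult[of p g] pr g by auto
    qed
  qed
  moreover have "bounded_exp_numbers P J \<subseteq> (\<lambda>g. \<Prod>p\<in>P. p ^ g p) ` PiE P (\<lambda>p. {0..J p})"
  proof
    fix n assume n: "n \<in> bounded_exp_numbers P J"
    define g where "g = restrict (\<lambda>p. multiplicity p n) P"
    have "g \<in> PiE P (\<lambda>p. {0..J p})" using n by (auto simp: g_def bounded_exp_numbers_def)
    moreover have "n = (\<Prod>p\<in>P. p ^ g p)"
      using bounded_exp_numbers_factorisation[OF fin pr n] by (simp add: g_def)
    ultimately show "n \<in> (\<lambda>g. \<Prod>p\<in>P. p ^ g p) ` PiE P (\<lambda>p. {0..J p})" by blast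
  qed
  ultimately show ?thesis using inj by (auto simp: bij_betw_def)
qed

lemma finite_euler_product:
  assumes fin: "finite P" and pr: "\<forall>p\<in>P. prime p"
  shows "(\<Prod>p\<in>P. \<Sum>j\<in>{0..J p}. (1 / real p ^ s) ^ j) = (\<Sum>n\<in>bounded_exp_numbers P J. 1 / real n ^ s)"
proof -
  have "(\<Prod>p\<in>P. \<Sum>j\<in>{0..J p}. (1 / real p ^ s) ^ j)
      = (\<Sum>g\<in>PiE P (\<lambda>p. {0..J p}). \<Prod>p\<in>P. (1 / real p ^ s) ^ g p)"
    using fin by (intro prod_sum_PiE) auto
  also have "\<dots> = (\<Sum>g\<in>PiE P (\<lambda>p. {0..J p}). 1 / real (\<Prod>p\<in>P. p ^ g p) ^ s)"
    by (intro sum.cong refl)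
       (simp add: power_one_over prod_dividef of_nat_prod prod_power_distrib flip: power_mult mult.commute)
  also have "\<dots> = (\<Sum>n\<in>bounded_exp_numbers P J. 1 / real n ^ s)"
    using bounded_exp_numbers_bij[OF fin pr, of J] by (rule sum.reindex_bij_betw)
  finally show ?thesis .
qed

lemma finite_bounded_exp_numbers:
  "finite P \<Longrightarrow> \<forall>p\<in>P. prime p \<Longrightarrow> finite (bounded_exp_numbers P J)"
  using bij_betw_finite[OF bounded_exp_numbers_bij] by (simp add: finite_PiE)

(* Such n are odd,
   which lets the 2-part and the odd part of a divisor be treated separately. *)

definition all_3mod4 :: "nat \<Rightarrow> bool" where
  "all_3mod4 n \<longleftrightarrow> n > 0 \<and> (\<forall>q. prime q \<longrightarrow> q dvd n \<longrightarrow> q mod 4 = 3)"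

lemma all_3mod4_coprime_two:
  assumes "all_3mod4 n" shows "coprime (2::nat) n"
proof -
  have "\<not> 2 dvd n"
  proof
    assume "2 dvd n"
    hence "(2::nat) mod 4 = 3" using assms two_is_prime_nat unfolding all_3mod4_def by blast
    thus False by simp
  qed
  thus ?thesis using two_is_prime_nat by (simp add: prime_imp_coprime)
qed

lemma local_factor_geometric:
  fixes p m :: nat assumes p: "prime p"
  shows "(1 - real p powr (- (real m + 1))) / (1 - 1 / real p) = (\<Sum>j\<in>{0..m}. (1 / real p ^ 1) ^ j)"
proof -
  have p1: "real p > 1" using p prime_gt_1_nat by simp
  have "- (real m + 1) = - real (Suc m)" by simp
  hence "real p powr (- (real m + 1)) = 1 / real p powr real (Suc m)"
    by (simp only: powr_minus_divide)
  also have "\<dots> = 1 / real p ^ Suc m" using p1 by (subst powr_realpow) auto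
  also have "\<dots> = (1 / real p) ^ Suc m" by (simp only: power_one_over)
  finally have "real p powr (- (real m + 1)) = (1 / real p) ^ Suc m" .
  moreover have "1 / real p \<noteq> 1" using p1 by simp
  ultimately show ?thesis by (simp add: atLeast0AtMost sum_gp0)
qed

lemma divisors_all_3mod4:
  assumes h: "h > 0"
  shows "bounded_exp_numbers {p. prime p \<and> p mod 4 = 3 \<and> p dvd h} (\<lambda>p. multiplicity p h)
           = {n. all_3mod4 n \<and> n dvd h}"
proof (intro equalityI subsetI)
  fix n assume "n \<in> bounded_exp_numbers {p. prime p \<and> p mod 4 = 3 \<and> p dvd h} (\<lambda>p. multiplicity p h)"
  hence n0: "n > 0" and nq: "\<And>q. prime q \<Longrightarrow> q dvd n \<Longrightarrow> q mod 4 = 3 \<and> q dvd h"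
    and nm: "\<And>p. prime p \<Longrightarrow> p mod 4 = 3 \<Longrightarrow> p dvd h \<Longrightarrow> multiplicity p n \<le> multiplicity p h"
    by (auto simp: bounded_exp_numbers_def)
  have "n dvd h"
  proof (rule multiplicity_le_imp_dvd)
    fix p :: nat assume p: "prime p"
    show "multiplicity p n \<le> multiplicity p h"
      using nm nq p by (cases "p dvd n") (auto simp: not_dvd_imp_multiplicity_0)
  qed (use n0 in simp)
  thus "n \<in> {n. all_3mod4 n \<and> n dvd h}" using n0 nq by (simp add: all_3mod4_def)
next
  fix n assume "n \<in> {n. all_3mod4 n \<and> n dvd h}"
  thus "n \<in> bounded_exp_numbers {p. prime p \<and> p mod 4 = 3 \<and> p dvd h} (\<lambda>p. multiplicity p h)"
    using h by (auto simp: all_3mod4_def bounded_exp_numbers_def intro: dvd_trans dvd_imp_multiplicity_le)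
qed

(* Coefficients c2 k with 2 W2(h) = sum_{k <= m_2(h)} c2 k; they decay like 2^(-k). *)

definition c2 :: "nat \<Rightarrow> real" where
  "c2 k = (if k = 0 then 1/2 else if k = 1 then -1/4 else 3 / 2 ^ (k+1))"

lemma c2_partial_sum: "m \<ge> 1 \<Longrightarrow> (\<Sum>k\<le>m. c2 k) = 1 - 3 / 2 ^ (m+1)"
  by (induction m rule: dec_induct) (simp_all add: c2_def field_simps)

lemma W2_c2_sum: "2 * W2 h = (\<Sum>k\<le>multiplicity 2 h. c2 k)"
  using c2_partial_sum[of "multiplicity 2 h"] by (auto simp: W2_def c2_def field_simps)

lemma singT_divisor_sum:
  assumes h: "h > 0"
  shows "singT h = (\<Sum>k\<le>multiplicity 2 h. c2 k) * (\<Sum>n\<in>{n. all_3mod4 n \<and> n dvd h}. 1 / real n)"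
proof -
  let ?P = "{p. prime p \<and> p mod 4 = 3 \<and> p dvd h}"
  have fin: "finite ?P" by (rule finite_subset[of _ "{..h}"]) (auto dest: dvd_imp_le[OF _ h])
  have "(\<Prod>p\<in>?P. (1 - (real p) powr (- (real (multiplicity p h) + 1))) / (1 - 1 / real p))
      = (\<Prod>p\<in>?P. \<Sum>j\<in>{0..multiplicity p h}. (1 / real p ^ 1) ^ j)"
    by (intro prod.cong refl local_factor_geometric) simp
  also have "\<dots> = (\<Sum>n\<in>{n. all_3mod4 n \<and> n dvd h}. 1 / real n)"
    using finite_euler_product[OF fin, where J="\<lambda>p. multiplicity p h" and s=1] divisors_all_3mod4[OF h] by simp
  finally show ?thesis unfolding singT_def W2_c2_sum by simp
qed

definition singT_partial :: "nat \<Rightarrow> real" where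
  "singT_partial N = (\<Sum>h=1..N. singT h)"

lemma card_multiples:
  fixes m N :: nat assumes m: "m > 0"
  shows "card {h\<in>{1..N}. m dvd h} = N div m"
proof -
  have "{h\<in>{1..N}. m dvd h} = (\<lambda>j. m * j) ` {1..N div m}"
  proof (intro equalityI subsetI)
    fix h assume h: "h \<in> {h\<in>{1..N}. m dvd h}"
    then obtain j where j: "h = m * j" by blast
    have "j \<ge> 1" using h j by (cases j) simp_all
    moreover have "j \<le> N div m" using h j m by (metis div_le_mono mem_Collect_eq atLeastAtMost_iff
        nonzero_mult_div_cancel_left not_gr_zero)
    ultimately show "h \<in> (\<lambda>j. m * j) ` {1..N div m}" unfolding j by (intro imageI) simp
  next
    fix h assume "h \<in> (\<lambda>j. m * j) ` {1..N div m}"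
    then obtain j where j: "h = m * j" and jA: "j \<in> {1..N div m}" by blast
    have "m * j \<le> m * (N div m)" using jA by simp
    also have "\<dots> \<le> N" by simp
    finally show "h \<in> {h\<in>{1..N}. m dvd h}" using j jA m by simp
  qed
  moreover have "inj_on (\<lambda>j. m * j) {1..N div m}" using m by (simp add: inj_on_def)
  ultimately show ?thesis by (simp add: card_image)
qed

lemma multiplicity_le_self:
  fixes p m :: nat assumes "m > 0" "p > 1" shows "multiplicity p m \<le> m"
proof -
  have "p ^ multiplicity p m \<le> m" using assms by (intro dvd_imp_le multiplicity_dvd) auto
  moreover have "(2::nat) ^ multiplicity p m \<le> p ^ multiplicity p m" using assms by (intro power_mono) auto
  moreover have "multiplicity p m < 2 ^ multiplicity p m" by (rule less_exp)
  ultimately show ?thesis by linarith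
qed

(* For h <= N both divisor sums in singT_divisor_sum may be taken over the box k, n <= N;
   since n in D is odd, the conditions 2^k | h and n | h combine to 2^k n | h. *)

lemma singT_box_sum:
  assumes h: "h \<in> {1..N}"
  shows "singT h = (\<Sum>k\<le>N. \<Sum>n\<in>{1..N}.
                      if all_3mod4 n \<and> 2 ^ k * n dvd h then c2 k / real n else 0)"
proof -
  have h0: "h > 0" and hN: "h \<le> N" using h by auto
  have exps: "{..multiplicity 2 h} = {k\<in>{..N}. (2::nat) ^ k dvd h}"
    using multiplicity_le_self[OF h0, of 2] hN power_dvd_iff_le_multiplicity[of h 2] h0 by auto
  have s1: "(\<Sum>k\<le>multiplicity 2 h. c2 k) = (\<Sum>k\<le>N. if (2::nat) ^ k dvd h then c2 k else 0)"
    unfolding exps by (rule sum.inter_filter) simp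
  have divs: "{n. all_3mod4 n \<and> n dvd h} = {n\<in>{1..N}. all_3mod4 n \<and> n dvd h}"
    using hN h0 by (auto simp: all_3mod4_def dest: dvd_imp_le)
  have s2: "(\<Sum>n\<in>{n. all_3mod4 n \<and> n dvd h}. 1 / real n)
           = (\<Sum>n\<in>{1..N}. if all_3mod4 n \<and> n dvd h then 1 / real n else 0)"
    unfolding divs by (rule sum.inter_filter) simp
  have comb: "(2::nat) ^ k dvd h \<and> n dvd h \<longleftrightarrow> 2 ^ k * n dvd h" if "all_3mod4 n" for k n
    using all_3mod4_coprime_two[OF that] by (auto simp: divides_mult intro: dvd_mult_left dvd_mult_right)
  show ?thesis unfolding singT_divisor_sum[OF h0] s1 s2 sum_product
    by (intro sum.cong refl) (auto simp: comb[symmetric])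
qed

(* Counting the h <= N divisible by 2^k n gives
   S(N) = sum_{k, n <= N, n in D} (c2 k / n) floor(N / (2^k n)). *)

lemma singT_partial_floor_sum:
  "singT_partial N = (\<Sum>k\<le>N. \<Sum>n\<in>{1..N}.
                        if all_3mod4 n then c2 k / real n * real (N div (2 ^ k * n)) else 0)"
proof -
  have "singT_partial N = (\<Sum>h=1..N. \<Sum>k\<le>N. \<Sum>n\<in>{1..N}.
                            if all_3mod4 n \<and> 2 ^ k * n dvd h then c2 k / real n else 0)"
    unfolding singT_partial_def by (rule sum.cong[OF refl singT_box_sum])
  also have "\<dots> = (\<Sum>k\<le>N. \<Sum>n\<in>{1..N}. \<Sum>h=1..N.
                     if all_3mod4 n \<and> 2 ^ k * n dvd h then c2 k / real n else 0)"
    by (subst sum.swap) (subst (2) sum.swap, rule refl)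
  also have "\<dots> = (\<Sum>k\<le>N. \<Sum>n\<in>{1..N}.
                     if all_3mod4 n then c2 k / real n * real (N div (2 ^ k * n)) else 0)"
  proof (intro sum.cong refl)
    fix k n
    show "(\<Sum>h=1..N. if all_3mod4 n \<and> 2 ^ k * n dvd h then c2 k / real n else 0)
        = (if all_3mod4 n then c2 k / real n * real (N div (2 ^ k * n)) else 0)"
    proof (cases "all_3mod4 n")
      case True
      have "(\<Sum>h=1..N. if all_3mod4 n \<and> 2 ^ k * n dvd h then c2 k / real n else 0)
          = c2 k / real n * real (card {h\<in>{1..N}. 2 ^ k * n dvd h})"
        using True by (simp add: sum.inter_filter[symmetric])
      also have "card {h\<in>{1..N}. 2 ^ k * n dvd h} = N div (2 ^ k * n)"
        using True by (intro card_multiples) (simp add: all_3mod4_def)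
      finally show ?thesis using True by simp
    qed simp
  qed
  finally show ?thesis .
qed

definition inv_sq_3mod4 :: "nat \<Rightarrow> real" where
  "inv_sq_3mod4 n = (if all_3mod4 n then 1 / real n ^ 2 else 0)"

definition Z34 :: real where
  "Z34 = suminf inv_sq_3mod4"

definition Z34_partial :: "nat \<Rightarrow> real" where
  "Z34_partial N = (\<Sum>n\<in>{1..N}. inv_sq_3mod4 n)"

lemma inv_sq_3mod4_nonneg: "inv_sq_3mod4 n \<ge> 0"
  by (simp add: inv_sq_3mod4_def)

lemma inv_sq_3mod4_le: "inv_sq_3mod4 n \<le> 1 / real n ^ 2"
  by (simp add: inv_sq_3mod4_def)

lemma summable_inv_sq_3mod4: "summable inv_sq_3mod4"
proof (rule summable_comparison_test')
  show "summable (\<lambda>n. inverse (real n ^ 2))" by (rule inverse_power_summable) simp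
  fix n :: nat show "norm (inv_sq_3mod4 n) \<le> inverse (real n ^ 2)"
    using inv_sq_3mod4_nonneg[of n] inv_sq_3mod4_le[of n] by (simp add: divide_inverse)
qed

lemma Z34_partial_tendsto: "Z34_partial \<longlonglongrightarrow> Z34"
proof -
  have "(\<Sum>n<Suc N. inv_sq_3mod4 n) = inv_sq_3mod4 0 + Z34_partial N" for N
    unfolding lessThan_Suc_atMost atLeast0AtMost[symmetric] Z34_partial_def
    by (simp add: sum.atLeast_Suc_atMost)
  moreover have "inv_sq_3mod4 0 = 0" by (simp add: inv_sq_3mod4_def all_3mod4_def)
  moreover have "(\<lambda>N. \<Sum>n<N. inv_sq_3mod4 n) \<longlonglongrightarrow> Z34"
    unfolding Z34_def by (rule summable_LIMSEQ[OF summable_inv_sq_3mod4])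
  ultimately show ?thesis using LIMSEQ_Suc by fastforce
qed

lemma Z34_partial_le: "Z34_partial N \<le> Z34"
  unfolding Z34_partial_def Z34_def
  using summable_inv_sq_3mod4 inv_sq_3mod4_nonneg by (intro sum_le_suminf) auto

lemma Z34_partial_nonneg: "Z34_partial N \<ge> 0"
  unfolding Z34_partial_def using inv_sq_3mod4_nonneg by (intro sum_nonneg) auto

(* Telescoping 1/(M+1)^2 <= 1/M - 1/(M+1) bounds the increments of Z(N). *)

lemma Z34_partial_increase:
  assumes "1 \<le> N" "N \<le> M"
  shows "Z34_partial M \<le> Z34_partial N + 1 / real N - 1 / real M"
  using assms(2)
proof (induction M rule: dec_induct)
  case (step M)
  define x where "x = real M"
  have x1: "x \<ge> 1" using step assms by (simp add: x_def)
  have "1 / (x + 1) ^ 2 \<le> 1 / (x * (x + 1))"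
    using x1 by (intro divide_left_mono) (auto simp: power2_eq_square)
  also have "\<dots> = 1 / x - 1 / (x + 1)" using x1 by (simp add: field_simps)
  finally have "inv_sq_3mod4 (Suc M) \<le> 1 / real M - 1 / real (Suc M)"
    using inv_sq_3mod4_le[of "Suc M"] by (simp add: x_def add.commute)
  thus ?case using step by (simp add: Z34_partial_def)
qed simp

lemma Z34_tail: assumes "1 \<le> N" shows "Z34 \<le> Z34_partial N + 1 / real N"
proof (rule LIMSEQ_le_const2[OF Z34_partial_tendsto], intro exI allI impI)
  fix M assume "N \<le> M"
  thus "Z34_partial M \<le> Z34_partial N + 1 / real N"
    using Z34_partial_increase[OF assms] by (smt (verit) of_nat_0_le_iff divide_nonneg_nonneg)
qed

(* Z(1) = 1 together with the tail bound places Z in [1,2]. *)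

lemma Z34_bounds: "1 \<le> Z34" "Z34 \<le> 2"
proof -
  have "Z34_partial 1 = 1" by (simp add: Z34_partial_def inv_sq_3mod4_def all_3mod4_def)
  thus "1 \<le> Z34" "Z34 \<le> 2" using Z34_partial_le[of 1] Z34_tail[of 1] by simp_all
qed


(* Euler product Z = prod_{p = 3 mod 4} (1 - p^-2)^-1.  The partial products over p <= n are
   squeezed between Z(n) (every m <= n has all its prime factors <= n) and Z (each finite
   product is a limit of finite sums of 1/m^2 over m in D). *)

definition primes_3mod4_upto :: "nat \<Rightarrow> nat set" where
  "primes_3mod4_upto n = {p. p \<le> n \<and> prime p \<and> p mod 4 = 3}"

definition euler_factor :: "nat \<Rightarrow> real" where
  "euler_factor i = (if prime i \<and> i mod 4 = 3 then 1 / (1 - 1 / real i ^ 2) else 1)"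

lemma primes_3mod4_upto_finite_primes: "finite (primes_3mod4_upto n)" "\<forall>p\<in>primes_3mod4_upto n. prime p"
  by (simp_all add: primes_3mod4_upto_def)

lemma inv_prime_sq_bounds: "prime p \<Longrightarrow> 0 \<le> 1 / real p ^ 2 \<and> 1 / real p ^ 2 < (1::real)"
  using prime_gt_1_nat[of p] by (simp add: divide_less_eq)

lemma euler_factor_prod:
  "(\<Prod>i\<le>n. euler_factor i) = (\<Prod>p\<in>primes_3mod4_upto n. 1 / (1 - 1 / real p ^ 2))"
proof -
  have "(\<Prod>i\<le>n. euler_factor i)
      = (\<Prod>i\<in>{i\<in>{..n}. prime i \<and> i mod 4 = 3}. 1 / (1 - 1 / real i ^ 2))"
    by (subst prod.inter_filter) (simp_all add: euler_factor_def)
  also have "{i\<in>{..n}. prime i \<and> i mod 4 = 3} = primes_3mod4_upto n"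
    by (auto simp: primes_3mod4_upto_def)
  finally show ?thesis .
qed

lemma geometric_partial_le: fixes x :: real assumes "0 \<le> x" "x < 1"
  shows "(\<Sum>j\<in>{0..J}. x ^ j) \<le> 1 / (1 - x)"
proof -
  have "(\<Sum>j\<in>{0..J}. x ^ j) = (1 - x ^ Suc J) / (1 - x)"
    using assms by (simp add: atLeast0AtMost sum_gp0)
  also have "\<dots> \<le> 1 / (1 - x)" using assms by (intro divide_right_mono) auto
  finally show ?thesis .
qed

lemma Z34_partial_le_euler_prod: "Z34_partial n \<le> (\<Prod>i\<le>n. euler_factor i)"
proof -
  let ?Q = "primes_3mod4_upto n"
  have "Z34_partial n = (\<Sum>m\<in>{m\<in>{1..n}. all_3mod4 m}. 1 / real m ^ 2)"
    unfolding Z34_partial_def inv_sq_3mod4_def by (subst sum.inter_filter) simp_all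
  also have "\<dots> \<le> (\<Sum>m\<in>bounded_exp_numbers ?Q (\<lambda>_. n). 1 / real m ^ 2)"
  proof (rule sum_mono2)
    show "finite (bounded_exp_numbers ?Q (\<lambda>_. n))"
      by (rule finite_bounded_exp_numbers[OF primes_3mod4_upto_finite_primes])
    show "{m \<in> {1..n}. all_3mod4 m} \<subseteq> bounded_exp_numbers ?Q (\<lambda>_. n)"
    proof (clarify)
      fix m assume m: "m \<in> {1..n}" "all_3mod4 m"
      hence m0: "m > 0" by simp
      have "q \<le> n" if "q dvd m" for q using dvd_imp_le[OF that m0] m by simp
      moreover have "multiplicity p m \<le> n" if "prime p" for p
        using multiplicity_le_self[OF m0, of p] prime_gt_1_nat[OF that] m by simp
      ultimately show "m \<in> bounded_exp_numbers ?Q (\<lambda>_. n)" using m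
        by (auto simp: bounded_exp_numbers_def primes_3mod4_upto_def all_3mod4_def)
    qed
  qed simp
  also have "\<dots> = (\<Prod>p\<in>?Q. \<Sum>j\<in>{0..n}. (1 / real p ^ 2) ^ j)"
    by (rule finite_euler_product[OF primes_3mod4_upto_finite_primes, symmetric])
  also have "\<dots> \<le> (\<Prod>p\<in>?Q. 1 / (1 - 1 / real p ^ 2))"
  proof (rule prod_mono)
    fix p assume "p \<in> ?Q"
    hence b: "0 \<le> 1 / real p ^ 2 \<and> 1 / real p ^ 2 < (1::real)"
      by (intro inv_prime_sq_bounds) (simp add: primes_3mod4_upto_def)
    thus "0 \<le> (\<Sum>j\<in>{0..n}. (1 / real p ^ 2) ^ j) \<and>
          (\<Sum>j\<in>{0..n}. (1 / real p ^ 2) ^ j) \<le> 1 / (1 - 1 / real p ^ 2)"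
      using geometric_partial_le[of "1 / real p ^ 2" n] by (auto intro: sum_nonneg)
  qed
  also have "\<dots> = (\<Prod>i\<le>n. euler_factor i)" by (rule euler_factor_prod[symmetric])
  finally show ?thesis .
qed

lemma euler_prod_le_Z34: "(\<Prod>i\<le>n. euler_factor i) \<le> Z34"
proof -
  let ?Q = "primes_3mod4_upto n"
  have lim: "(\<lambda>J. \<Prod>p\<in>?Q. \<Sum>j\<in>{0..J}. (1 / real p ^ 2) ^ j) \<longlonglongrightarrow> (\<Prod>p\<in>?Q. 1 / (1 - 1 / real p ^ 2))"
  proof (rule tendsto_prod)
    fix p assume "p \<in> ?Q"
    hence b: "0 \<le> 1 / real p ^ 2" "1 / real p ^ 2 < (1::real)"
      using inv_prime_sq_bounds by (auto simp: primes_3mod4_upto_def)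
    have "(\<lambda>J. \<Sum>j<Suc J. (1 / real p ^ 2) ^ j) \<longlonglongrightarrow> 1 / (1 - 1 / real p ^ 2)"
      using geometric_sums[of "1 / real p ^ 2"] b
      by (intro LIMSEQ_Suc) (simp add: sums_def)
    thus "(\<lambda>J. \<Sum>j\<in>{0..J}. (1 / real p ^ 2) ^ j) \<longlonglongrightarrow> 1 / (1 - 1 / real p ^ 2)"
      by (simp add: atLeast0AtMost lessThan_Suc_atMost)
  qed
  have "(\<Prod>p\<in>?Q. 1 / (1 - 1 / real p ^ 2)) \<le> Z34"
  proof (rule LIMSEQ_le_const2[OF lim], intro exI allI impI)
    fix J :: nat
    have "(\<Prod>p\<in>?Q. \<Sum>j\<in>{0..J}. (1 / real p ^ 2) ^ j)
        = (\<Sum>m\<in>bounded_exp_numbers ?Q (\<lambda>_. J). inv_sq_3mod4 m)"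
      unfolding finite_euler_product[OF primes_3mod4_upto_finite_primes]
      by (intro sum.cong refl)
         (auto simp: inv_sq_3mod4_def all_3mod4_def bounded_exp_numbers_def primes_3mod4_upto_def)
    also have "\<dots> \<le> Z34"
      unfolding Z34_def
      using summable_inv_sq_3mod4 inv_sq_3mod4_nonneg finite_bounded_exp_numbers[OF primes_3mod4_upto_finite_primes]
      by (intro sum_le_suminf) auto
    finally show "(\<Prod>p\<in>?Q. \<Sum>j\<in>{0..J}. (1 / real p ^ 2) ^ j) \<le> Z34" .
  qed
  thus ?thesis by (simp add: euler_factor_prod)
qed

lemma euler_prod_tendsto: "(\<lambda>n. \<Prod>i\<le>n. euler_factor i) \<longlonglongrightarrow> Z34"
  by (rule tendsto_sandwich[OF _ _ Z34_partial_tendsto tendsto_const])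
     (simp_all add: Z34_partial_le_euler_prod euler_prod_le_Z34)

lemma sqrt_prod: "sqrt (\<Prod>i\<in>A. f i) = (\<Prod>i\<in>A. sqrt (f i))"
  by (induction A rule: infinite_finite_induct) (simp_all add: real_sqrt_mult)

lemma LR_beta_sq: "LR_beta ^ 2 = Z34 / 2"
proof -
  define f where "f = (\<lambda>n::nat. if prime n \<and> n mod 4 = 3 then (1 - 1 / (real n)^2) powr (-1/2) else (1::real))"
  have f_sqrt: "f i = sqrt (euler_factor i)" for i
  proof (cases "prime i \<and> i mod 4 = 3")
    case True
    define x where "x = 1 - 1 / (real i)^2"
    have x0: "x > 0" using inv_prime_sq_bounds[of i] True by (simp add: x_def)
    have "x powr (-1/2) = x powr (- (1/2))" by simp
    also have "\<dots> = inverse (sqrt x)" using x0 by (simp only: powr_minus powr_half_sqrt)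
    also have "\<dots> = sqrt (1 / x)" by (simp add: real_sqrt_inverse divide_inverse)
    finally show ?thesis using True by (simp add: f_def euler_factor_def x_def)
  next
    case False thus ?thesis by (simp only: f_def euler_factor_def if_not_P[OF False] if_False real_sqrt_one)
  qed
  have "(\<lambda>n. sqrt (\<Prod>i\<le>n. euler_factor i)) \<longlonglongrightarrow> sqrt Z34"
    by (intro tendsto_real_sqrt euler_prod_tendsto)
  hence "(\<lambda>n. \<Prod>i\<le>n. f (i + 0)) \<longlonglongrightarrow> sqrt Z34"
    by (simp add: f_sqrt sqrt_prod)
  moreover have "sqrt Z34 \<noteq> 0" using Z34_bounds by simp
  ultimately have "f has_prod sqrt Z34" by (simp add: has_prod_def raw_has_prod_def)
  hence "prodinf f = sqrt Z34" by (rule has_prod_unique[symmetric])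
  hence beta: "LR_beta = (1 / sqrt 2) * sqrt Z34" by (simp add: LR_beta_def f_def)
  show ?thesis unfolding beta using Z34_bounds by (simp add: power_mult_distrib power_divide)
qed

(* Mean value of T_h: replacing floor(N / (2^k n)) by N / (2^k n) costs O(log N), and the
   main term N * (sum_{k <= N} c2 k / 2^k) * Z(N) equals (Z/2) N + O(1). *)

lemma c2_abs: "\<bar>c2 k\<bar> \<le> 2 * (1/2) ^ k"
proof -
  consider "k = 0" | "k = 1" | "k \<ge> 2" by linarith
  thus ?thesis
  proof cases
    case 3
    hence "\<bar>c2 k\<bar> = 3 / 2 ^ (k + 1)" by (simp add: c2_def)
    also have "\<dots> \<le> 2 * (1/2) ^ k" by (simp add: field_simps power_one_over)
    finally show ?thesis .
  qed (simp_all add: c2_def)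
qed

lemma c2_abs_sum: "(\<Sum>k\<le>N. \<bar>c2 k\<bar>) \<le> 4"
proof -
  have "(\<Sum>k\<le>N. \<bar>c2 k\<bar>) \<le> 2 * (\<Sum>k\<le>N. (1/2::real) ^ k)"
    using c2_abs by (simp add: sum_distrib_left sum_mono)
  also have "(\<Sum>k\<le>N. (1/2::real) ^ k) = (1 - (1/2) ^ Suc N) / (1 - 1/2)" by (simp add: sum_gp0)
  also have "\<dots> \<le> 2" by simp
  finally show ?thesis by simp
qed

definition c2_weighted :: "nat \<Rightarrow> real" where
  "c2_weighted N = (\<Sum>k\<le>N. c2 k / 2 ^ k)"

lemma c2_weighted_closed_form: "c2_weighted (Suc N) = 1/2 - 1 / (2 * 4 ^ Suc N)"
proof (induction N)
  case (Suc N)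
  have "(2::real) ^ N * 2 ^ N = 4 ^ N" by (simp flip: power_mult_distrib)
  hence "c2 (Suc (Suc N)) / 2 ^ Suc (Suc N) = 3 / (32 * 4 ^ N)"
    by (simp add: c2_def power_add field_simps)
  thus ?case using Suc.IH by (simp add: c2_weighted_def field_simps)
qed (simp add: c2_weighted_def c2_def)

lemma c2_weighted_error: "real N * \<bar>c2_weighted N - 1/2\<bar> \<le> 1"
proof (cases N)
  case (Suc M)
  have le: "real N \<le> 4 ^ N"
  proof -
    have "N < 2 ^ N" by (rule less_exp)
    also have "(2::nat) ^ N \<le> 4 ^ N" by (rule power_mono) auto
    finally show ?thesis by (metis less_imp_le of_nat_le_iff of_nat_numeral of_nat_power)
  qed
  have eq: "\<bar>c2_weighted N - 1/2\<bar> = 1 / (2 * 4 ^ N)"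
    using Suc c2_weighted_closed_form[of M] by simp
  have "real N * \<bar>c2_weighted N - 1/2\<bar> \<le> 4 ^ N * \<bar>c2_weighted N - 1/2\<bar>"
    using le by (rule mult_right_mono) simp
  also have "\<dots> = 1/2" unfolding eq by simp
  finally show ?thesis by simp
qed simp

lemma floor_div_error: assumes m: "m > 0" shows "\<bar>real (N div m) - real N / real m\<bar> \<le> 1"
proof -
  have "real N / real m = real (N div m) + real (N mod m) / real m"
    using m by (simp add: field_simps flip: of_nat_mult of_nat_add)
  moreover have "real (N mod m) / real m < 1" using m by simp
  ultimately show ?thesis by (simp add: abs_le_iff)
qed

(* The rounding errors sum to at most sum_k |c2 k| * sum_{n <= N} 1/n <= 4 harm N. *)

lemma singT_partial_main_term: "\<bar>singT_partial N - real N * c2_weighted N * Z34_partial N\<bar> \<le> 4 * harm N"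
proof -
  define X where "X = (\<lambda>k n. if all_3mod4 n
                      then c2 k / real n * (real (N div (2 ^ k * n)) - real N / (2 ^ k * real n)) else 0)"
  have "real N * c2_weighted N * Z34_partial N
      = real N * (\<Sum>k\<le>N. \<Sum>n\<in>{1..N}. c2 k / 2 ^ k * inv_sq_3mod4 n)"
    by (simp add: c2_weighted_def Z34_partial_def sum_product)
  also have "\<dots> = (\<Sum>k\<le>N. \<Sum>n\<in>{1..N}. real N * (c2 k / 2 ^ k * inv_sq_3mod4 n))"
    by (simp add: sum_distrib_left)
  also have "\<dots> = (\<Sum>k\<le>N. \<Sum>n\<in>{1..N}.
                     if all_3mod4 n then c2 k / real n * (real N / (2 ^ k * real n)) else 0)"
    by (intro sum.cong refl) (simp add: inv_sq_3mod4_def power2_eq_square field_simps)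
  finally have "singT_partial N - real N * c2_weighted N * Z34_partial N = (\<Sum>k\<le>N. \<Sum>n\<in>{1..N}. X k n)"
    unfolding singT_partial_floor_sum X_def
    by (simp add: sum_subtractf[symmetric]) (intro sum.cong refl, simp add: right_diff_distrib)
  hence "\<bar>singT_partial N - real N * c2_weighted N * Z34_partial N\<bar> \<le> (\<Sum>k\<le>N. \<bar>\<Sum>n\<in>{1..N}. X k n\<bar>)"
    by (simp only: sum_abs)
  also have "\<dots> \<le> (\<Sum>k\<le>N. \<Sum>n\<in>{1..N}. \<bar>X k n\<bar>)" by (intro sum_mono sum_abs)
  also have "\<dots> \<le> (\<Sum>k\<le>N. \<Sum>n\<in>{1..N}. \<bar>c2 k\<bar> * (1 / real n))"
  proof (intro sum_mono)
    fix k n assume n: "n \<in> {1..N}"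
    have "\<bar>real (N div (2 ^ k * n)) - real N / (2 ^ k * real n)\<bar> \<le> 1"
      using floor_div_error[of "2 ^ k * n" N] n by simp
    hence "\<bar>c2 k\<bar> / real n * \<bar>real (N div (2 ^ k * n)) - real N / (2 ^ k * real n)\<bar>
           \<le> \<bar>c2 k\<bar> / real n * 1" by (intro mult_left_mono) auto
    thus "\<bar>X k n\<bar> \<le> \<bar>c2 k\<bar> * (1 / real n)" by (simp add: X_def abs_mult)
  qed
  also have "\<dots> = (\<Sum>k\<le>N. \<bar>c2 k\<bar>) * harm N"
    by (simp add: sum_product harm_def divide_inverse)
  also have "\<dots> \<le> 4 * harm N"
    using c2_abs_sum by (intro mult_right_mono) (auto simp: harm_def intro: sum_nonneg)
  finally show ?thesis .
qed

lemma singT_partial_asymp: "\<bar>singT_partial N - Z34 / 2 * real N\<bar> \<le> 4 * harm N + 3"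
proof (cases "N = 0")
  case True thus ?thesis by (simp add: singT_partial_def harm_def)
next
  case False
  hence N1: "N \<ge> 1" by simp
  define A where "A = real N * (c2_weighted N - 1/2) * Z34_partial N"
  define B where "B = real N / 2 * (Z34 - Z34_partial N)"
  have "\<bar>A\<bar> = (real N * \<bar>c2_weighted N - 1/2\<bar>) * Z34_partial N"
    using Z34_partial_nonneg[of N] by (simp add: A_def abs_mult)
  also have "\<dots> \<le> 1 * 2"
    using c2_weighted_error[of N] Z34_partial_le[of N] Z34_partial_nonneg[of N] Z34_bounds
    by (intro mult_mono) simp_all
  finally have A: "\<bar>A\<bar> \<le> 2" by simp
  have "B \<le> real N / 2 * (1 / real N)"
    unfolding B_def using Z34_tail[OF N1] by (intro mult_left_mono) auto
  hence B: "B \<le> 1/2" using N1 by simp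
  have B0: "B \<ge> 0" unfolding B_def using Z34_partial_le[of N] by simp
  have "real N * c2_weighted N * Z34_partial N - Z34 / 2 * real N = A - B"
    by (simp add: A_def B_def field_simps)
  moreover have "\<bar>A - B\<bar> \<le> 5/2" using abs_triangle_ineq4[of A B] A B B0 by simp
  ultimately show ?thesis using singT_partial_main_term[of N] by linarith
qed

lemma pair_sum_singT_error:
  assumes H1: "H \<ge> 1"
  shows "\<bar>pair_sum singT H - LR_beta ^ 2 * real H ^ 2\<bar> \<le> real H * (15 + 8 * ln (real H))"
proof -
  define E where "E N = singT_partial N - Z34 / 2 * real N" for N
  have "2 * (\<Sum>N=1..n. real N) = real n * (real n + 1)" for n
    by (induction n) (simp_all add: algebra_simps)
  hence gauss: "2 * (\<Sum>N=1..H-1. real N) = real (H - 1) * real H"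
    using H1 by (simp add: of_nat_diff)
  have "pair_sum singT H - LR_beta ^ 2 * real H ^ 2
      = 2 * (\<Sum>N=1..H-1. E N) + Z34 / 2 * (2 * (\<Sum>N=1..H-1. real N)) - Z34 / 2 * real H ^ 2"
    by (simp add: pair_sum_partial_sums singT_partial_def E_def LR_beta_sq sum_subtractf
                  sum_distrib_left algebra_simps)
  also have "\<dots> = 2 * (\<Sum>N=1..H-1. E N) - Z34 / 2 * real H"
    unfolding gauss using H1 by (simp add: of_nat_diff power2_eq_square algebra_simps)
  finally have split: "pair_sum singT H - LR_beta ^ 2 * real H ^ 2
                        = 2 * (\<Sum>N=1..H-1. E N) - Z34 / 2 * real H" .
  have "\<bar>\<Sum>N=1..H-1. E N\<bar> \<le> (\<Sum>N=1..H-1. \<bar>E N\<bar>)" by (rule sum_abs)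
  also have "\<dots> \<le> real (card {1..H-1}) * (7 + 4 * ln (real H))"
  proof (rule sum_bounded_above)
    fix N assume N: "N \<in> {1..H-1}"
    have "harm N \<le> 1 + ln (real N)"
      using euler_mascheroni_sequence_decreasing[of 1 N] N by (simp add: harm_def)
    also have "ln (real N) \<le> ln (real H)" using N by (subst ln_le_cancel_iff) auto
    finally show "\<bar>E N\<bar> \<le> 7 + 4 * ln (real H)" using singT_partial_asymp[of N] by (simp add: E_def)
  qed
  also have "\<dots> \<le> real H * (7 + 4 * ln (real H))" using H1 by (intro mult_right_mono) auto
  finally have "\<bar>\<Sum>N=1..H-1. E N\<bar> \<le> real H * (7 + 4 * ln (real H))" .
  moreover have "\<bar>Z34 / 2 * real H\<bar> \<le> real H"
    using Z34_bounds mult_right_mono[of Z34 2 "real H"] by simp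
  ultimately show ?thesis unfolding split by (simp add: algebra_simps)
qed

(* Since H log H = O(H^(1+eps)), this is the asymptotic formula of the theorem. *)

lemma pair_sum_singT_bigo:
  assumes "\<epsilon> > 0"
  shows "(\<lambda>H. pair_sum singT H - LR_beta ^ 2 * real H ^ 2) \<in> O(\<lambda>H. real H powr (1 + \<epsilon>))"
proof -
  have "(\<lambda>H. pair_sum singT H - LR_beta ^ 2 * real H ^ 2) \<in> O(\<lambda>H. real H * (15 + 8 * ln (real H)))"
  proof (rule bigoI[where c=1], unfold eventually_at_top_linorder, intro exI allI impI)
    fix H :: nat assume "1 \<le> H"
    thus "norm (pair_sum singT H - LR_beta ^ 2 * real H ^ 2) \<le> 1 * norm (real H * (15 + 8 * ln (real H)))"
      using pair_sum_singT_error[of H] by simp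
  qed
  also have "(\<lambda>H::nat. real H * (15 + 8 * ln (real H))) \<in> O(\<lambda>H. real H powr (1 + \<epsilon>))"
    using assms by real_asymp
  finally show ?thesis .
qed

theorem theorem1:
  shows "(\<forall>H::nat.
           (\<Sum>(d1, d2)\<in>{(d1, d2). d1 \<in> {1..H} \<and> d2 \<in> {1..H} \<and> d1 \<noteq> d2}.
               singT (nat \<bar>int d2 - int d1\<bar>))
           = 2 * (\<Sum>h = 1..H - 1. real (H - h) * singT h))
         \<and> (\<forall>\<epsilon>::real. \<epsilon> > 0 \<longrightarrow>
              (\<lambda>H::nat. (\<Sum>(d1, d2)\<in>{(d1, d2). d1 \<in> {1..H} \<and> d2 \<in> {1..H} \<and> d1 \<noteq> d2}.
                            singT (nat \<bar>int d2 - int d1\<bar>)) - LR_beta ^ 2 * (real H)^2)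
              \<in> O(\<lambda>H. (real H) powr (1 + \<epsilon>)))"
proof (intro conjI allI impI)
  fix H :: nat
  show "(\<Sum>(d1, d2)\<in>{(d1, d2). d1 \<in> {1..H} \<and> d2 \<in> {1..H} \<and> d1 \<noteq> d2}.
           singT (nat \<bar>int d2 - int d1\<bar>)) = 2 * (\<Sum>h = 1..H - 1. real (H - h) * singT h)"
    using pair_sum_partial_sums[of singT H] weighted_sum_partial_sums[of H singT]
    by (simp add: pair_sum_def)
next
  fix \<epsilon> :: real assume "\<epsilon> > 0"
  thus "(\<lambda>H::nat. (\<Sum>(d1, d2)\<in>{(d1, d2). d1 \<in> {1..H} \<and> d2 \<in> {1..H} \<and> d1 \<noteq> d2}.
                    singT (nat \<bar>int d2 - int d1\<bar>)) - LR_beta ^ 2 * (real H)^2)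
          \<in> O(\<lambda>H. (real H) powr (1 + \<epsilon>))"
    using pair_sum_singT_bigo by (simp add: pair_sum_def)
qed

end
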